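(* Let $0<\epsilon\le1/4$, let $f,g\in\mathcal H_{(d)}$ be nonzero and $x,y\in\mathbb C^{n+1}$ nonzero, with $u\le\epsilon/5$, $v\le\epsilon/5$ and $\operatorname{rank}Df(x)|_{x^\perp}=n$. Then $\operatorname{rank}Dg(y)|_{y^\perp}=n$ and $(1-\epsilon)\mu(g,y)\le\mu(f,x)\le(1+\epsilon)\mu(g,y)$.
   Context: $n\ge2$, $(d)=(d_1,\dots,d_n)$, $D=\max_i d_i\ge2$. $\mathcal H_{(d)}$: systems of $n$ homogeneous polynomials in $n+1$ complex variables of degrees $d_i$, with the Bombieri–Weyl inner product $\langle f,g\rangle=\sum_i\sum_{|\alpha|=d_i}\frac{\alpha_0!\cdots\alpha_n!}{d_i!}f_{i,\alpha}\overline{g_{i,\alpha}}$ and its norm. $x^\perp$ is the Hermitian orthogonal complement of $x$. $\mu(f,x)=\|f\|\,\|(Df(x)|_{x^\perp})^{-1}\mathrm{diag}(\sqrt{d_i}\|x\|^{d_i-1})\|$ (operator norm), $\infty$ if not invertible. $d_R(x,y)\in[0,\pi/2]$ with $\cos d_R(x,y)=|\langle x,y\rangle|/(\|x\|\|y\|)$. $u=\frac{D^{3/2}}{2}\mu(f,x)d_R(x,y)$, $v=D^{1/2}\mu(f,x)\,\big\|\frac{f}{\|f\|}-\frac{g}{\|g\|}\big\|$. *)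

theory Defs
  imports "HOL-Analysis.Analysis"
begin

text \<open>A system f = (f_1,...,f_n) of homogeneous polynomials in the n+1 variables
  indexed by the finite type 'm, equations indexed by the finite type 'k
  (n = CARD('k), n+1 = CARD('m)).  A polynomial system is given by its coefficients:
  F i alpha is the coefficient of the monomial x^alpha in f_i.\<close>

type_synonym ('k, 'm) sys = "'k \<Rightarrow> ('m \<Rightarrow> nat) \<Rightarrow> complex"

definition mons :: "nat \<Rightarrow> ('m::finite \<Rightarrow> nat) set" where
  "mons k = {\<alpha>. sum \<alpha> UNIV = k}"

definition homsys :: "('k \<Rightarrow> nat) \<Rightarrow> ('k, 'm::finite) sys \<Rightarrow> bool" where
  "homsys d F \<longleftrightarrow> (\<forall>i \<alpha>. \<alpha> \<notin> mons (d i) \<longrightarrow> F i \<alpha> = 0)"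

definition peval :: "('k \<Rightarrow> nat) \<Rightarrow> ('k, 'm::finite) sys \<Rightarrow> 'k \<Rightarrow> complex^'m \<Rightarrow> complex" where
  "peval d F i x = (\<Sum>\<alpha>\<in>mons (d i). F i \<alpha> * (\<Prod>j\<in>UNIV. (x$j) ^ (\<alpha> j)))"

definition bwnorm :: "('k::finite \<Rightarrow> nat) \<Rightarrow> ('k, 'm::finite) sys \<Rightarrow> real" where
  "bwnorm d F = sqrt (\<Sum>i\<in>UNIV. \<Sum>\<alpha>\<in>mons (d i).
      (\<Prod>j\<in>UNIV. fact (\<alpha> j)) / fact (d i) * (cmod (F i \<alpha>))\<^sup>2)"

definition Dmat :: "('k \<Rightarrow> nat) \<Rightarrow> ('k, 'm::finite) sys \<Rightarrow> complex^'m \<Rightarrow> 'k \<Rightarrow> 'm \<Rightarrow> complex" where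
  "Dmat d F x i j = deriv (\<lambda>t. peval d F i (\<chi> k. if k = j then t else x$k)) (x$j)"

definition Dlin :: "('k::finite \<Rightarrow> nat) \<Rightarrow> ('k, 'm::finite) sys \<Rightarrow> complex^'m \<Rightarrow> complex^'m \<Rightarrow> complex^'k" where
  "Dlin d F x v = (\<chi> i. \<Sum>j\<in>UNIV. Dmat d F x i j * v$j)"

definition hinner :: "complex^'m::finite \<Rightarrow> complex^'m \<Rightarrow> complex" where
  "hinner x y = (\<Sum>j\<in>UNIV. x$j * cnj (y$j))"

definition xperp :: "complex^'m::finite \<Rightarrow> (complex^'m) set" where
  "xperp x = {v. hinner v x = 0}"

text \<open>rank (Df(x) restricted to x-perp) = n, i.e. the restricted map, whose
  codomain is C^n, has full rank n: its image is all of C^n.\<close>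
definition full_rank :: "('k::finite \<Rightarrow> nat) \<Rightarrow> ('k, 'm::finite) sys \<Rightarrow> complex^'m \<Rightarrow> bool" where
  "full_rank d F x \<longleftrightarrow> Dlin d F x ` xperp x = UNIV"

definition mu :: "('k::finite \<Rightarrow> nat) \<Rightarrow> ('k, 'm::finite) sys \<Rightarrow> complex^'m \<Rightarrow> ereal" where
  "mu d F x = (if full_rank d F x \<and> inj_on (Dlin d F x) (xperp x)
     then ereal (bwnorm d F * onorm (\<lambda>w::complex^'k.
        inv_into (xperp x) (Dlin d F x)
          (\<chi> i. complex_of_real (sqrt (real (d i)) * norm x ^ (d i - 1)) * w$i)))
     else \<infinity>)"

definition dR :: "complex^'m::finite \<Rightarrow> complex^'m \<Rightarrow> real" where
  "dR x y = arccos (cmod (hinner x y) / (norm x * norm y))"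

definition Dmax :: "('k::finite \<Rightarrow> nat) \<Rightarrow> nat" where
  "Dmax d = Max (range d)"

definition nrmdiff :: "('k::finite \<Rightarrow> nat) \<Rightarrow> ('k, 'm::finite) sys \<Rightarrow> ('k, 'm) sys \<Rightarrow> real" where
  "nrmdiff d F G = bwnorm d (\<lambda>i \<alpha>. F i \<alpha> / complex_of_real (bwnorm d F)
                                   - G i \<alpha> / complex_of_real (bwnorm d G))"

end

theory Submission
  imports Defs
begin

text \<open>
  Write L_x(f)v = diag(sqrt(d_i) \<parallel>x\<parallel>^(d_i - 1))^-1 Df(x)v for v in x-perp.
  A finite condition number mu(f,x) = m is equivalent to the lower bound
  \<parallel>v\<parallel>/m \<le> \<parallel>L_x(f)v\<parallel>/\<parallel>f\<parallel> on x-perp (with m optimal), since the restriction of Df(x)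
  to x-perp maps an n-dimensional space to C^n.  Passing to unit representatives a of x and
  b of y with real \<langle>a,b\<rangle> \<ge> 0, an explicit isometry from b-perp onto a-perp moves vectors
  by at most d_R(x,y) times their length; combined with Lipschitz estimates for homogeneous
  polynomials in the Bombieri--Weyl norm this transfers the lower bound from (f,x) to (g,y)
  with loss \<eta> = sqrt(D) (\<parallel>f/\<parallel>f\<parallel> - g/\<parallel>g\<parallel>\<parallel> + D d_R(x,y)).  The hypotheses give
  \<eta> mu(f,x) \<le> 3\<epsilon>/5; transferring once from (f,x) to (g,y) and once back yields
  mu(g)(1 - \<eta> mu(f)) \<le> mu(f) and mu(f)(1 - \<eta> mu(g)) \<le> mu(g), whence the claim.
\<close>

section \<open>Homogeneous polynomials given by coefficient functions\<close>

text \<open>A homogeneous polynomial of degree k in the variables indexed by 'm is represented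
  by its coefficient function p on the exponent vectors of total degree k.\<close>

definition heval :: "nat \<Rightarrow> (('m::finite \<Rightarrow> nat) \<Rightarrow> complex) \<Rightarrow> complex^'m \<Rightarrow> complex" where
  "heval k p x = (\<Sum>\<alpha>\<in>mons k. p \<alpha> * (\<Prod>j\<in>UNIV. (x$j) ^ (\<alpha> j)))"

text \<open>Coefficients of the partial derivative with respect to x_j: the monomial x^\<beta>
  receives the coefficient (\<beta>_j + 1) p(\<beta> + e_j).\<close>
definition dcoeff :: "'m \<Rightarrow> (('m \<Rightarrow> nat) \<Rightarrow> complex) \<Rightarrow> (('m \<Rightarrow> nat) \<Rightarrow> complex)" where
  "dcoeff j p = (\<lambda>\<beta>. of_nat (\<beta> j + 1) * p (\<beta>(j := \<beta> j + 1)))"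

definition bw_sq :: "nat \<Rightarrow> (('m::finite \<Rightarrow> nat) \<Rightarrow> complex) \<Rightarrow> real" where
  "bw_sq k p = (\<Sum>\<alpha>\<in>mons k. (\<Prod>j\<in>UNIV. fact (\<alpha> j)) / fact k * (cmod (p \<alpha>))\<^sup>2)"

definition dderiv :: "nat \<Rightarrow> (('m::finite \<Rightarrow> nat) \<Rightarrow> complex) \<Rightarrow> complex^'m \<Rightarrow> complex^'m \<Rightarrow> complex" where
  "dderiv k p y v = (\<Sum>j\<in>UNIV. v$j * heval (k - 1) (dcoeff j p) y)"

lemma finite_mons: "finite (mons k :: ('m::finite \<Rightarrow> nat) set)"
proof (rule finite_subset)
  show "mons k \<subseteq> PiE (UNIV::'m set) (\<lambda>_. {..k})"
    by (auto simp: mons_def PiE_def extensional_def Pi_def intro!: member_le_sum)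
qed (rule finite_PiE, auto)

lemma mons_0: "mons 0 = {(\<lambda>_. 0) :: 'm::finite \<Rightarrow> nat}"
  by (auto simp: mons_def fun_eq_iff)

lemma bw_sq_nonneg: "bw_sq k p \<ge> 0"
  unfolding bw_sq_def by (intro sum_nonneg mult_nonneg_nonneg divide_nonneg_nonneg prod_nonneg) auto

lemma heval_0: "heval 0 p y = p (\<lambda>_. 0)"
  by (simp add: heval_def mons_0)

lemma bw_sq_0: "bw_sq 0 p = (cmod (p (\<lambda>_. 0)))^2"
  by (simp add: bw_sq_def mons_0)

lemma sum_fun_upd: "sum (\<beta>(j := v)) (UNIV::'m::finite set) + \<beta> j = sum \<beta> UNIV + (v::nat)"
proof -
  have "sum (\<beta>(j := v)) UNIV = v + sum \<beta> (UNIV - {j})"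
    by (subst sum.remove[of UNIV j]) (auto intro!: sum.cong)
  moreover have "sum \<beta> UNIV = \<beta> j + sum \<beta> (UNIV - {j})"
    by (subst sum.remove[of UNIV j]) auto
  ultimately show ?thesis by simp
qed

lemma prod_split: "(\<Prod>l\<in>(UNIV::'m::finite set). g l) = g j * (\<Prod>l\<in>UNIV-{j}. g l)"
  by (subst prod.remove[of UNIV j]) auto

lemma prod_fun_upd:
  "(\<Prod>l\<in>(UNIV::'m::finite set). g l ((\<beta>(j := v)) l)) = g j v * (\<Prod>l\<in>UNIV-{j}. g l (\<beta> l))"
  by (subst prod_split[of _ j]) (auto intro!: prod.cong)

text \<open>Shifting \<beta> \<mapsto> \<beta> + e_j is a bijection from exponents of degree m onto the exponents of
  degree m+1 with positive j-th entry; sums vanishing elsewhere can be reindexed along it.\<close>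
lemma sum_mons_shift:
  fixes H :: "('m::finite \<Rightarrow> nat) \<Rightarrow> 'a::comm_monoid_add" and j :: 'm
  assumes "\<And>\<alpha>. \<alpha> j = 0 \<Longrightarrow> H \<alpha> = 0"
  shows "(\<Sum>\<beta>\<in>mons m. H (\<beta>(j := \<beta> j + 1))) = (\<Sum>\<alpha>\<in>mons (Suc m). H \<alpha>)"
proof -
  have "(\<Sum>\<alpha>\<in>mons (Suc m). H \<alpha>) = (\<Sum>\<alpha>\<in>{\<alpha>\<in>mons (Suc m). \<alpha> j \<noteq> 0}. H \<alpha>)"
    by (rule sum.mono_neutral_right) (auto simp: finite_mons assms)
  also have "\<dots> = (\<Sum>\<beta>\<in>mons m. H (\<beta>(j := \<beta> j + 1)))"
  proof (rule sum.reindex_bij_witness[where i="\<lambda>\<beta>. \<beta>(j := \<beta> j + 1)" and j="\<lambda>\<alpha>. \<alpha>(j := \<alpha> j - 1)"])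
    fix a :: "'m \<Rightarrow> nat" assume a: "a \<in> {\<alpha> \<in> mons (Suc m). \<alpha> j \<noteq> 0}"
    then show "(a(j := a j - 1))(j := (a(j := a j - 1)) j + 1) = a"
      by (auto simp: fun_eq_iff)
    then show "H ((a(j := a j - 1))(j := (a(j := a j - 1)) j + 1)) = H a" by simp
    show "a(j := a j - 1) \<in> mons m"
      using sum_fun_upd[of a j "a j - 1"] a by (auto simp: mons_def)
  next
    fix b :: "'m \<Rightarrow> nat" assume "b \<in> mons m"
    then show "b(j := b j + 1) \<in> {\<alpha> \<in> mons (Suc m). \<alpha> j \<noteq> 0}"
      using sum_fun_upd[of b j "b j + 1"] by (auto simp: mons_def)
    show "(b(j := b j + 1))(j := (b(j := b j + 1)) j - 1) = b" by (simp add: fun_eq_iff)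
  qed
  finally show ?thesis by simp
qed

lemma euler_term:
  fixes y :: "complex^'m::finite"
  shows "y$j * heval m (dcoeff j p) y
       = (\<Sum>\<alpha>\<in>mons (Suc m). of_nat (\<alpha> j) * p \<alpha> * (\<Prod>l\<in>UNIV. (y$l) ^ (\<alpha> l)))"
proof -
  have "y$j * heval m (dcoeff j p) y = (\<Sum>\<beta>\<in>mons m.
      (\<lambda>\<alpha>. of_nat (\<alpha> j) * p \<alpha> * (\<Prod>l\<in>UNIV. (y$l) ^ (\<alpha> l))) (\<beta>(j := \<beta> j + 1)))"
    unfolding heval_def dcoeff_def sum_distrib_left
    by (rule sum.cong[OF refl]) (simp add: prod_fun_upd prod_split[of _ j] algebra_simps)
  also have "\<dots> = (\<Sum>\<alpha>\<in>mons (Suc m). of_nat (\<alpha> j) * p \<alpha> * (\<Prod>l\<in>UNIV. (y$l) ^ (\<alpha> l)))"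
    by (rule sum_mons_shift) simp
  finally show ?thesis .
qed

lemma euler_identity:
  fixes y :: "complex^'m::finite"
  shows "(\<Sum>j\<in>UNIV. y$j * heval m (dcoeff j p) y) = of_nat (Suc m) * heval (Suc m) p y"
proof -
  have "(\<Sum>j\<in>UNIV. y$j * heval m (dcoeff j p) y) =
      (\<Sum>\<alpha>\<in>mons (Suc m). (\<Sum>j\<in>UNIV. of_nat (\<alpha> j)) * p \<alpha> * (\<Prod>l\<in>UNIV. (y$l) ^ (\<alpha> l)))"
    by (simp add: euler_term sum.swap[of _ UNIV] sum_distrib_right)
  also have "\<dots> = (\<Sum>\<alpha>\<in>mons (Suc m). of_nat (Suc m) * (p \<alpha> * (\<Prod>l\<in>UNIV. (y$l) ^ (\<alpha> l))))"
    by (rule sum.cong) (auto simp: mons_def of_nat_sum[symmetric])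
  finally show ?thesis by (simp add: heval_def sum_distrib_left)
qed

lemma bw_sq_dcoeff_term:
  fixes p :: "('m::finite \<Rightarrow> nat) \<Rightarrow> complex"
  shows "bw_sq m (dcoeff j p)
       = (\<Sum>\<alpha>\<in>mons (Suc m). (\<Prod>l\<in>UNIV. fact (\<alpha> l)) * real (\<alpha> j) / fact m * (cmod (p \<alpha>))\<^sup>2)"
proof -
  have "bw_sq m (dcoeff j p) = (\<Sum>\<beta>\<in>mons m.
      (\<lambda>\<alpha>. (\<Prod>l\<in>UNIV. fact (\<alpha> l)) * real (\<alpha> j) / fact m * (cmod (p \<alpha>))\<^sup>2) (\<beta>(j := \<beta> j + 1)))"
    unfolding bw_sq_def dcoeff_def
    by (rule sum.cong[OF refl])
      (simp add: prod_fun_upd prod_split[of _ j] norm_mult power_mult_distrib power2_eq_square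
        algebra_simps del: of_nat_Suc)
  also have "\<dots> = (\<Sum>\<alpha>\<in>mons (Suc m). (\<Prod>l\<in>UNIV. fact (\<alpha> l)) * real (\<alpha> j) / fact m * (cmod (p \<alpha>))\<^sup>2)"
    by (rule sum_mons_shift) simp
  finally show ?thesis .
qed

text \<open>The Bombieri--Weyl weights are designed so that the derivatives of p together carry
  exactly (m+1)^2 times its squared norm.\<close>
lemma bw_sq_dcoeff:
  fixes p :: "('m::finite \<Rightarrow> nat) \<Rightarrow> complex"
  shows "(\<Sum>j\<in>UNIV. bw_sq m (dcoeff j p)) = (real (Suc m))^2 * bw_sq (Suc m) p"
proof -
  have "(\<Sum>j\<in>UNIV. bw_sq m (dcoeff j p)) = (\<Sum>\<alpha>\<in>mons (Suc m).
      (\<Prod>l\<in>UNIV. fact (\<alpha> l)) * (\<Sum>j\<in>UNIV. real (\<alpha> j)) / fact m * (cmod (p \<alpha>))\<^sup>2)"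
    by (simp add: bw_sq_dcoeff_term sum.swap[of _ UNIV] sum_distrib_right sum_distrib_left
        sum_divide_distrib)
  also have "\<dots> = (\<Sum>\<alpha>\<in>mons (Suc m).
      (real (Suc m))^2 * ((\<Prod>l\<in>UNIV. fact (\<alpha> l)) / fact (Suc m) * (cmod (p \<alpha>))\<^sup>2))"
  proof (rule sum.cong[OF refl])
    fix \<alpha> :: "'m \<Rightarrow> nat" assume "\<alpha> \<in> mons (Suc m)"
    then have "(\<Sum>j\<in>UNIV. real (\<alpha> j)) = real (Suc m)" by (simp add: mons_def of_nat_sum[symmetric])
    then show "(\<Prod>l\<in>UNIV. fact (\<alpha> l)) * (\<Sum>j\<in>UNIV. real (\<alpha> j)) / fact m * (cmod (p \<alpha>))\<^sup>2 =
         (real (Suc m))\<^sup>2 * ((\<Prod>l\<in>UNIV. fact (\<alpha> l)) / fact (Suc m) * (cmod (p \<alpha>))\<^sup>2)"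
      by (simp add: power2_eq_square field_simps del: of_nat_Suc)
  qed
  finally show ?thesis by (simp add: bw_sq_def sum_distrib_left)
qed

text \<open>Cauchy--Schwarz combined with the previous identity: the workhorse estimate for
  expressions \<Sum>_j a_j z_j in which z_j is controlled by the j-th derivative of p.\<close>
lemma dcoeff_sum_bound:
  fixes a :: "complex^'m::finite" and p :: "('m \<Rightarrow> nat) \<Rightarrow> complex"
  assumes z: "\<And>j. cmod (z j) \<le> sqrt (bw_sq m (dcoeff j p)) * B" and B: "B \<ge> 0"
  shows "cmod (\<Sum>j\<in>UNIV. a$j * z j) \<le> norm a * (real (Suc m) * sqrt (bw_sq (Suc m) p)) * B"
proof -
  have "cmod (\<Sum>j\<in>UNIV. a$j * z j) \<le> (\<Sum>j\<in>UNIV. cmod (a$j) * sqrt (bw_sq m (dcoeff j p))) * B"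
    by (rule order_trans[OF norm_sum])
      (auto simp: norm_mult sum_distrib_right mult.assoc intro!: sum_mono mult_left_mono z)
  also have "\<dots> = (\<Sum>j\<in>UNIV. \<bar>cmod (a$j)\<bar> * \<bar>sqrt (bw_sq m (dcoeff j p))\<bar>) * B"
    by (simp add: bw_sq_nonneg)
  also have "\<dots> \<le> (L2_set (\<lambda>j. cmod (a$j)) UNIV * L2_set (\<lambda>j. sqrt (bw_sq m (dcoeff j p))) UNIV) * B"
    by (intro mult_right_mono L2_set_mult_ineq B)
  also have "L2_set (\<lambda>j. sqrt (bw_sq m (dcoeff j p))) UNIV = real (Suc m) * sqrt (bw_sq (Suc m) p)"
    by (simp add: L2_set_def bw_sq_nonneg bw_sq_dcoeff real_sqrt_mult del: of_nat_Suc)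
  finally show ?thesis by (simp add: norm_vec_def)
qed

lemma euler_difference:
  fixes x y :: "complex^'m::finite"
  shows "of_nat (Suc m) * (heval (Suc m) p y - heval (Suc m) p x) =
      (\<Sum>j\<in>UNIV. (y - x)$j * heval m (dcoeff j p) y)
      + (\<Sum>j\<in>UNIV. x$j * (heval m (dcoeff j p) y - heval m (dcoeff j p) x))"
proof -
  have "of_nat (Suc m) * (heval (Suc m) p y - heval (Suc m) p x) =
      (\<Sum>j\<in>UNIV. y$j * heval m (dcoeff j p) y) - (\<Sum>j\<in>UNIV. x$j * heval m (dcoeff j p) x)"
    by (simp add: euler_identity right_diff_distrib del: of_nat_Suc)
  also have "\<dots> = (\<Sum>j\<in>UNIV. (y - x)$j * heval m (dcoeff j p) y)
      + (\<Sum>j\<in>UNIV. x$j * (heval m (dcoeff j p) y - heval m (dcoeff j p) x))"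
    by (simp add: ring_distribs sum_subtractf)
  finally show ?thesis .
qed

text \<open>Pointwise bound |p(y)| \<le> \<parallel>p\<parallel> \<parallel>y\<parallel>^k, by induction on the degree via Euler's identity.\<close>
lemma heval_bound: "cmod (heval k p y) \<le> sqrt (bw_sq k p) * norm (y::complex^'m::finite) ^ k"
proof (induction k arbitrary: p)
  case 0
  then show ?case by (simp add: heval_0 bw_sq_0)
next
  case (Suc m)
  have "real (Suc m) * cmod (heval (Suc m) p y) = cmod (\<Sum>j\<in>UNIV. y$j * heval m (dcoeff j p) y)"
    by (simp add: euler_identity norm_mult del: of_nat_Suc)
  also have "\<dots> \<le> norm y * (real (Suc m) * sqrt (bw_sq (Suc m) p)) * norm y ^ m"
    by (rule dcoeff_sum_bound[OF Suc.IH]) simp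
  finally show ?case by (simp add: algebra_simps del: of_nat_Suc)
qed

lemma heval_lipschitz:
  fixes x y :: "complex^'m::finite"
  assumes x: "norm x \<le> r" and y: "norm y \<le> r"
  shows "cmod (heval k p y - heval k p x) \<le> real k * sqrt (bw_sq k p) * r ^ (k - 1) * norm (y - x)"
proof (induction k arbitrary: p)
  case 0
  then show ?case by (simp add: heval_0)
next
  case (Suc m)
  have r: "r \<ge> 0" using x norm_ge_zero order_trans by blast
  define S where "S = real (Suc m) * sqrt (bw_sq (Suc m) p)"
  have S: "S \<ge> 0" by (simp add: S_def bw_sq_nonneg)
  have "real (Suc m) * cmod (heval (Suc m) p y - heval (Suc m) p x) =
      cmod ((\<Sum>j\<in>UNIV. (y - x)$j * heval m (dcoeff j p) y)
      + (\<Sum>j\<in>UNIV. x$j * (heval m (dcoeff j p) y - heval m (dcoeff j p) x)))"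
    unfolding euler_difference[symmetric] norm_mult norm_of_nat ..
  also have "\<dots> \<le> cmod (\<Sum>j\<in>UNIV. (y - x)$j * heval m (dcoeff j p) y)
      + cmod (\<Sum>j\<in>UNIV. x$j * (heval m (dcoeff j p) y - heval m (dcoeff j p) x))"
    by (rule norm_triangle_ineq)
  also have "cmod (\<Sum>j\<in>UNIV. (y - x)$j * heval m (dcoeff j p) y) \<le> norm (y - x) * S * r ^ m"
    unfolding S_def
  proof (rule dcoeff_sum_bound)
    show "cmod (heval m (dcoeff j p) y) \<le> sqrt (bw_sq m (dcoeff j p)) * r ^ m" for j
      by (rule order_trans[OF heval_bound]) (intro mult_left_mono power_mono y; simp add: bw_sq_nonneg)
  qed (simp add: r)
  also have "cmod (\<Sum>j\<in>UNIV. x$j * (heval m (dcoeff j p) y - heval m (dcoeff j p) x))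
      \<le> norm x * S * (real m * r ^ (m - 1) * norm (y - x))"
    unfolding S_def
  proof (rule dcoeff_sum_bound)
    show "cmod (heval m (dcoeff j p) y - heval m (dcoeff j p) x)
        \<le> sqrt (bw_sq m (dcoeff j p)) * (real m * r ^ (m - 1) * norm (y - x))" for j
      using Suc.IH[of "dcoeff j p"] by (simp add: algebra_simps)
  qed (simp add: r)
  also have "\<dots> \<le> real m * norm (y - x) * S * r ^ m"
  proof (cases m)
    case (Suc m')
    have "norm x * S * (real m * r ^ m' * norm (y - x)) \<le> r * S * (real m * r ^ m' * norm (y - x))"
      by (intro mult_right_mono x) (auto simp: S r)
    then show ?thesis using Suc by (simp add: algebra_simps)
  qed simp
  finally have "real (Suc m) * cmod (heval (Suc m) p y - heval (Suc m) p x)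
      \<le> real (Suc m) * (S * r ^ m * norm (y - x))"
    by (simp add: algebra_simps)
  then show ?case by (simp add: S_def algebra_simps del: of_nat_Suc)
qed

lemma dderiv_bound:
  assumes "k \<ge> 1"
  shows "cmod (dderiv k p y v) \<le> norm v * (real k * sqrt (bw_sq k p)) * norm (y::complex^'m::finite) ^ (k - 1)"
proof -
  obtain m where k: "k = Suc m" using assms by (cases k) auto
  show ?thesis
    unfolding dderiv_def k diff_Suc_1 by (rule dcoeff_sum_bound[OF heval_bound]) simp
qed

lemma dderiv_lipschitz:
  fixes x y :: "complex^'m::finite"
  assumes "k \<ge> 1" "norm x \<le> r" "norm y \<le> r"
  shows "cmod (dderiv k p y v - dderiv k p x v)
      \<le> norm v * (real k * sqrt (bw_sq k p)) * (real (k - 1) * r ^ (k - 2) * norm (y - x))"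
proof -
  obtain m where k: "k = Suc m" using assms by (cases k) auto
  have r: "r \<ge> 0" using assms(2) norm_ge_zero order_trans by blast
  have "dderiv k p y v - dderiv k p x v = (\<Sum>j\<in>UNIV. v$j * (heval m (dcoeff j p) y - heval m (dcoeff j p) x))"
    by (simp add: dderiv_def k ring_distribs sum_subtractf)
  also have "cmod \<dots> \<le> norm v * (real k * sqrt (bw_sq k p)) * (real (k - 1) * r ^ (k - 2) * norm (y - x))"
    unfolding k
  proof (rule dcoeff_sum_bound)
    show "cmod (heval m (dcoeff j p) y - heval m (dcoeff j p) x)
        \<le> sqrt (bw_sq m (dcoeff j p)) * (real (Suc m - 1) * r ^ (Suc m - 2) * norm (y - x))" for j
      using heval_lipschitz[OF assms(2,3), of m "dcoeff j p"] by (simp add: algebra_simps)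
  qed (simp add: r)
  finally show ?thesis .
qed

lemma dderiv_diff_dir: "dderiv k p y (v - w) = dderiv k p y v - dderiv k p y w"
  by (simp add: dderiv_def ring_distribs sum_subtractf)

lemma dderiv_diff_poly: "dderiv k (\<lambda>\<alpha>. p \<alpha> - q \<alpha>) y v = dderiv k p y v - dderiv k q y v"
  by (simp add: dderiv_def dcoeff_def heval_def ring_distribs sum_subtractf)

lemma dderiv_divide_poly: "dderiv k (\<lambda>\<alpha>. p \<alpha> / c) y v = dderiv k p y v / c"
proof -
  have "heval n (\<lambda>\<beta>. q \<beta> / c) y = heval n q y / c" for n q
    by (simp add: heval_def sum_divide_distrib)
  moreover have "dcoeff j (\<lambda>\<alpha>. p \<alpha> / c) = (\<lambda>\<beta>. dcoeff j p \<beta> / c)" for j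
    by (simp add: dcoeff_def fun_eq_iff)
  ultimately show ?thesis by (simp add: dderiv_def sum_divide_distrib)
qed

lemma dderiv_scale: "dderiv k p (c *s y) v = c ^ (k - 1) * dderiv k p (y::complex^'m::finite) v"
proof -
  have "heval n q (c *s y) = c ^ n * heval n q y" for n q
  proof -
    have "(\<Prod>j\<in>UNIV. ((c *s y)$j) ^ (\<alpha> j)) = c ^ n * (\<Prod>j\<in>UNIV. (y$j) ^ (\<alpha> j))"
      if "\<alpha> \<in> mons n" for \<alpha>
      using that by (simp add: power_mult_distrib prod.distrib power_sum[symmetric] mons_def)
    then show ?thesis unfolding heval_def sum_distrib_left by (auto intro!: sum.cong)
  qed
  then show ?thesis by (simp add: dderiv_def sum_distrib_left algebra_simps)
qed

section \<open>The polynomial system and its derivative\<close>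

lemma deriv_univariate_poly:
  fixes c :: "'a \<Rightarrow> complex" and e :: "'a \<Rightarrow> nat"
  assumes "finite A"
  shows "deriv (\<lambda>t. \<Sum>\<alpha>\<in>A. c \<alpha> * t ^ (e \<alpha>)) t0 = (\<Sum>\<alpha>\<in>A. c \<alpha> * (of_nat (e \<alpha>) * t0 ^ (e \<alpha> - 1)))"
  by (rule DERIV_imp_deriv) (auto intro!: derivative_eq_intros sum.cong simp: algebra_simps)

lemma Dmat_eq:
  fixes F :: "('k::finite, 'm::finite) sys"
  assumes "d i \<ge> 1"
  shows "Dmat d F x i j = heval (d i - 1) (dcoeff j (F i)) x"
proof -
  define C where "C \<alpha> = (\<Prod>l\<in>UNIV-{j}. (x$l) ^ (\<alpha> l))" for \<alpha> :: "'m \<Rightarrow> nat"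
  have C_upd: "C (\<beta>(j := v)) = C \<beta>" for \<beta> v unfolding C_def by (rule prod.cong) auto
  have "peval d F i (\<chi> k. if k = j then t else x$k) = (\<Sum>\<alpha>\<in>mons (d i). (F i \<alpha> * C \<alpha>) * t ^ (\<alpha> j))" for t
    unfolding peval_def C_def by (rule sum.cong[OF refl]) (simp add: prod_split[of _ j])
  then have "Dmat d F x i j = deriv (\<lambda>t. \<Sum>\<alpha>\<in>mons (d i). (F i \<alpha> * C \<alpha>) * t ^ (\<alpha> j)) (x$j)"
    unfolding Dmat_def by presburger
  also have "\<dots> = (\<Sum>\<alpha>\<in>mons (d i). (F i \<alpha> * C \<alpha>) * (of_nat (\<alpha> j) * (x$j) ^ (\<alpha> j - 1)))"
    by (rule deriv_univariate_poly[OF finite_mons])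
  also have "\<dots> = (\<Sum>\<alpha>\<in>mons (Suc (d i - 1)). of_nat (\<alpha> j) * F i \<alpha> * ((x$j) ^ (\<alpha> j - 1) * C \<alpha>))"
    using assms by (simp add: algebra_simps)
  also have "\<dots> = (\<Sum>\<beta>\<in>mons (d i - 1).
      (\<lambda>\<alpha>. of_nat (\<alpha> j) * F i \<alpha> * ((x$j) ^ (\<alpha> j - 1) * C \<alpha>)) (\<beta>(j := \<beta> j + 1)))"
    by (rule sum_mons_shift[symmetric]) simp
  also have "\<dots> = heval (d i - 1) (dcoeff j (F i)) x"
    unfolding heval_def dcoeff_def
    by (rule sum.cong[OF refl]) (simp add: C_upd prod_split[of _ j] C_def)
  finally show ?thesis .
qed

lemma Dlin_dderiv:
  assumes "\<forall>i. d i \<ge> 1"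
  shows "Dlin d F x v $ i = dderiv (d i) (F i) x v"
  using assms by (simp add: Dlin_def dderiv_def Dmat_eq mult.commute)

lemma bwnorm_eq: "bwnorm d F = sqrt (\<Sum>i\<in>UNIV. bw_sq (d i) (F i))"
  by (simp add: bwnorm_def bw_sq_def)

lemma bwnorm_eq_L2: "bwnorm d F = L2_set (\<lambda>i. sqrt (bw_sq (d i) (F i))) UNIV"
  by (simp add: bwnorm_eq L2_set_def bw_sq_nonneg)

lemma bwnorm_nonneg: "bwnorm d F \<ge> 0"
  by (simp add: bwnorm_eq sum_nonneg bw_sq_nonneg)

lemma bwnorm_pos:
  fixes F :: "('k::finite, 'm::finite) sys"
  assumes "homsys d F" "F \<noteq> (\<lambda>_ _. 0)"
  shows "bwnorm d F > 0"
proof -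
  obtain i \<alpha> where F: "F i \<alpha> \<noteq> 0" using assms(2) by (meson ext)
  then have \<alpha>: "\<alpha> \<in> mons (d i)" using assms(1) unfolding homsys_def by blast
  have "0 < (\<Prod>j\<in>UNIV. fact (\<alpha> j)) / fact (d i) * (cmod (F i \<alpha>))^2"
    using F by (simp add: prod_pos)
  also have "\<dots> \<le> bw_sq (d i) (F i)"
    unfolding bw_sq_def by (rule member_le_sum[OF \<alpha>]) (auto simp: finite_mons prod_nonneg)
  also have "\<dots> \<le> (\<Sum>i\<in>UNIV. bw_sq (d i) (F i))"
    by (rule member_le_sum) (auto simp: bw_sq_nonneg)
  finally show ?thesis by (simp add: bwnorm_eq)
qed

definition normalize_sys :: "('k::finite \<Rightarrow> nat) \<Rightarrow> ('k, 'm::finite) sys \<Rightarrow> ('k, 'm) sys" where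
  "normalize_sys d F = (\<lambda>i \<alpha>. F i \<alpha> / complex_of_real (bwnorm d F))"

lemma bwnorm_normalize_sys:
  assumes "bwnorm d F > 0"
  shows "bwnorm d (normalize_sys d F) = 1"
proof -
  have "(\<Sum>i\<in>UNIV. bw_sq (d i) (normalize_sys d F i)) = (\<Sum>i\<in>UNIV. bw_sq (d i) (F i)) / (bwnorm d F)^2"
    using assms by (simp add: bw_sq_def normalize_sys_def norm_divide power_divide sum_divide_distrib)
  also have "\<dots> = 1"
    using assms by (simp add: bwnorm_eq sum_nonneg bw_sq_nonneg)
  finally show ?thesis by (simp add: bwnorm_eq)
qed

lemma nrmdiff_eq: "nrmdiff d F G = bwnorm d (\<lambda>i \<alpha>. normalize_sys d F i \<alpha> - normalize_sys d G i \<alpha>)"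
  by (simp add: nrmdiff_def normalize_sys_def)

lemma nrmdiff_sym: "nrmdiff d G F = nrmdiff d F G"
  by (simp add: nrmdiff_def bwnorm_def norm_minus_commute)

lemma d_le_Dmax: "d i \<le> Dmax (d :: 'k::finite \<Rightarrow> nat)"
  unfolding Dmax_def by (rule Max_ge) auto

section \<open>Hermitian geometry of complex^'m\<close>

lemma hinner_add_left: "hinner (v + w) z = hinner v z + hinner w z"
  by (simp add: hinner_def ring_distribs sum.distrib)
lemma hinner_diff_left: "hinner (v - w) z = hinner v z - hinner w z"
  by (simp add: hinner_def ring_distribs sum_subtractf)
lemma hinner_add_right: "hinner z (v + w) = hinner z v + hinner z w"
  by (simp add: hinner_def ring_distribs sum.distrib)
lemma hinner_diff_right: "hinner z (v - w) = hinner z v - hinner z w"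
  by (simp add: hinner_def ring_distribs sum_subtractf)
lemma hinner_scale_left: "hinner (c *s v) w = c * hinner v w"
  by (simp add: hinner_def sum_distrib_left mult.assoc)
lemma hinner_scale_right: "hinner v (c *s w) = cnj c * hinner v w"
  by (simp add: hinner_def sum_distrib_left algebra_simps)
lemma scaleR_complex: "r *\<^sub>R (z::complex) = complex_of_real r * z"
  by (simp add: scaleR_conv_of_real)
lemma hinner_scaleR_left: "hinner (r *\<^sub>R v) w = complex_of_real r * hinner v w"
  by (simp add: hinner_def scaleR_complex sum_distrib_left mult.assoc)
lemma hinner_commute: "hinner w v = cnj (hinner v w)"
  by (simp add: hinner_def mult.commute)

lemma cnj_phase: "h \<noteq> 0 \<Longrightarrow> cnj h * h / complex_of_real (cmod h) = complex_of_real (cmod h)"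
  by (simp add: mult.commute[of "cnj h"] complex_norm_square[symmetric] power2_eq_square)

lemma norm_sq_vec: "(norm (v::complex^'m::finite))^2 = (\<Sum>j\<in>UNIV. (cmod (v$j))^2)"
  by (simp add: norm_vec_def L2_set_def sum_nonneg)

lemma hinner_self: "hinner v v = complex_of_real ((norm (v::complex^'m::finite))^2)"
  by (simp only: hinner_def norm_sq_vec complex_norm_square of_real_sum)

lemma norm_smult: "norm (c *s (v::complex^'m::finite)) = cmod c * norm v"
proof -
  have "(norm (c *s v))^2 = (cmod c * norm v)^2"
    by (simp add: norm_sq_vec norm_mult power_mult_distrib sum_distrib_left)
  then show ?thesis by (simp add: power2_eq_iff_nonneg)
qed

lemma Re_hinner: "Re (hinner v w) = inner v (w::complex^'m::finite)"
  by (simp add: hinner_def inner_vec_def inner_complex_def)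

text \<open>Cauchy--Schwarz for the Hermitian product, reduced to the real one by a phase rotation.\<close>
lemma hinner_bound: "cmod (hinner v w) \<le> norm v * norm (w::complex^'m::finite)"
proof (cases "hinner v w = 0")
  case False
  define c where "c = cnj (hinner v w) / complex_of_real (cmod (hinner v w))"
  have "hinner (c *s v) w = complex_of_real (cmod (hinner v w))"
    using False by (simp add: hinner_scale_left c_def cnj_phase)
  then have "cmod (hinner v w) = inner (c *s v) w"
    by (metis Re_complex_of_real Re_hinner)
  also have "\<dots> \<le> norm (c *s v) * norm w" by (rule norm_cauchy_schwarz)
  finally show ?thesis using False by (simp add: norm_smult c_def norm_divide)
qed simp

lemma norm_diff_sq:
  "(norm (v - w))^2 = (norm v)^2 + (norm w)^2 - 2 * Re (hinner v (w::complex^'m::finite))"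
proof -
  have "complex_of_real ((norm (v - w))^2) = hinner (v - w) (v - w)" by (simp add: hinner_self)
  also have "\<dots> = hinner v v + hinner w w - (hinner v w + cnj (hinner v w))"
    by (simp add: hinner_diff_left hinner_diff_right hinner_commute[of w v])
  finally have "complex_of_real ((norm (v - w))^2)
      = complex_of_real ((norm v)^2) + complex_of_real ((norm w)^2) - complex_of_real (2 * Re (hinner v w))"
    by (simp only: hinner_self complex_add_cnj)
  then show ?thesis by (metis of_real_add of_real_diff of_real_eq_iff)
qed

lemma norm_add_sq:
  "(norm (v + w))^2 = (norm v)^2 + (norm w)^2 + 2 * Re (hinner v (w::complex^'m::finite))"
proof -
  have "hinner v (- w) = - hinner v w" by (simp add: hinner_def sum_negf)
  then show ?thesis using norm_diff_sq[of v "- w"] by simp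
qed

lemma xperp_scale: "c \<noteq> 0 \<Longrightarrow> xperp (c *s x) = xperp x"
  by (auto simp: xperp_def hinner_scale_right)

lemma dR_sym: "dR y x = dR x y"
  by (simp add: dR_def hinner_commute[of y x] mult.commute)

lemma two_one_minus_cos_le: "2 * (1 - cos t) \<le> (t::real)^2"
proof -
  have "2 * (1 - cos t) = 4 * (sin (t/2))^2"
    using cos_double_sin[of "t/2"] by simp
  also have "(sin (t/2))^2 \<le> (t/2)^2"
    by (metis abs_ge_zero abs_sin_x_le_abs_x power2_abs power_mono)
  finally show ?thesis by (simp add: power_divide)
qed

text \<open>The argument of arccos in d_R lies in [0,1], hence d_R is the angle with that cosine.\<close>
lemma dR_cos:
  fixes x y :: "complex^'m::finite"
  shows "cos (dR x y) = cmod (hinner x y) / (norm x * norm y)" and "0 \<le> dR x y"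
proof -
  have "-1 \<le> cmod (hinner x y) / (norm x * norm y)" "cmod (hinner x y) / (norm x * norm y) \<le> 1"
    using hinner_bound[of x y] by (auto simp: divide_le_eq_1 intro: order_trans[of _ 0])
  then show "cos (dR x y) = cmod (hinner x y) / (norm x * norm y)" "0 \<le> dR x y"
    unfolding dR_def by (rule cos_arccos, rule arccos_lbound)
qed

lemma unit_representatives:
  fixes x y :: "complex^'m::finite"
  assumes x: "x \<noteq> 0" and y: "y \<noteq> 0"
  obtains a b c0 \<omega> where "norm a = 1" "norm b = 1" "hinner a b = complex_of_real c0" "c0 \<ge> 0"
    "2 * (1 - c0) \<le> (dR x y)^2"
    "a = complex_of_real (1 / norm x) *s x" "b = (\<omega> / complex_of_real (norm y)) *s y" "cmod \<omega> = 1"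
proof -
  define h where "h = hinner x y"
  define \<omega> where "\<omega> = (if h = 0 then 1 else h / complex_of_real (cmod h))"
  define c0 where "c0 = cmod h / (norm x * norm y)"
  have c\<omega>: "cmod \<omega> = 1" by (simp add: \<omega>_def norm_divide)
  have \<omega>h: "cnj \<omega> * h = complex_of_real (cmod h)"
    by (simp add: \<omega>_def cnj_phase)
  have "hinner (complex_of_real (1 / norm x) *s x) ((\<omega> / complex_of_real (norm y)) *s y)
      = (cnj \<omega> * h) / complex_of_real (norm x * norm y)"
    by (simp add: hinner_scale_left hinner_scale_right h_def field_simps)
  then have ab: "hinner (complex_of_real (1 / norm x) *s x) ((\<omega> / complex_of_real (norm y)) *s y)
      = complex_of_real c0"
    by (simp add: \<omega>h c0_def)
  have "2 * (1 - c0) \<le> (dR x y)^2"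
    using two_one_minus_cos_le[of "dR x y"] by (simp add: dR_cos c0_def h_def)
  then show ?thesis
    using that[OF _ _ ab _ _ refl refl c\<omega>] x y by (simp add: norm_smult norm_divide c\<omega> c0_def)
qed

lemma hinner_perp_bound:
  fixes a b v :: "complex^'m::finite"
  assumes a: "norm a = 1" and b: "norm b = 1" and ab: "hinner a b = complex_of_real c0"
    and v: "v \<in> xperp b"
  shows "(cmod (hinner v a))^2 \<le> (norm v)^2 * (1 - c0^2)"
proof -
  have "hinner v a = hinner v (a - complex_of_real c0 *s b)"
    using v by (simp add: hinner_diff_right hinner_scale_right xperp_def)
  then have "cmod (hinner v a) \<le> norm v * norm (a - complex_of_real c0 *s b)"
    by (simp add: hinner_bound)
  moreover have "(norm (a - complex_of_real c0 *s b))^2 = 1 - c0^2"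
    using norm_diff_sq[of a "complex_of_real c0 *s b"] a b ab
    by (simp add: norm_smult hinner_scale_right power2_eq_square)
  ultimately show ?thesis
    by (metis norm_ge_zero power_mono power_mult_distrib)
qed

text \<open>An explicit isometry from b-perp onto a-perp which moves every vector by at most
  \<parallel>a - b\<parallel> = sqrt(2(1 - c0)) times its length (a, b unit with real \<langle>a,b\<rangle> = c0 \<ge> 0).\<close>
lemma perp_rotation:
  fixes a b v :: "complex^'m::finite"
  assumes a: "norm a = 1" and b: "norm b = 1" and ab: "hinner a b = complex_of_real c0"
    and c0: "c0 \<ge> 0" and v: "v \<in> xperp b"
  defines "u \<equiv> v - (hinner v a / complex_of_real (1 + c0)) *s (a + b)"
  shows "u \<in> xperp a" "norm u = norm v" "norm (v - u) \<le> sqrt (2 * (1 - c0)) * norm v"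
proof -
  define h where "h = hinner v a"
  define t where "t = h / complex_of_real (1 + c0)"
  have u_eq: "u = v - t *s (a + b)" by (simp add: u_def t_def h_def)
  have ba: "hinner b a = complex_of_real c0" using ab by (simp add: hinner_commute[of b a])
  have c0_le: "c0 \<le> 1" using hinner_bound[of a b] a b ab c0 by simp
  have pos: "1 + c0 > 0" using c0 by simp
  have pos': "1 + complex_of_real c0 \<noteq> 0"
    using pos by (metis of_real_1 of_real_add of_real_eq_0_iff less_irrefl)
  have "hinner u a = h - t * (hinner a a + hinner b a)"
    by (simp add: u_eq hinner_diff_left hinner_scale_left hinner_add_left h_def ring_distribs)
  also have "\<dots> = 0" using a pos' by (simp add: hinner_self ba t_def)
  finally show "u \<in> xperp a" by (simp add: xperp_def)
  have ct: "cmod t = cmod h / (1 + c0)"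
    by (simp only: t_def norm_divide norm_of_real abs_of_pos[OF pos])
  have "(norm (t *s (a + b)))^2 = (cmod t)^2 * (norm (a + b))^2"
    by (simp only: norm_smult power_mult_distrib)
  also have "(norm (a + b))^2 = 2 * (1 + c0)"
    using norm_add_sq[of a b] a b ab by simp
  also have "(cmod t)^2 * (2 * (1 + c0)) = 2 * (cmod h)^2 / (1 + c0)"
  proof -
    have "(r / q)^2 * (2 * q) = 2 * r^2 / q" if "q > 0" for r q :: real
      using that by (simp add: power2_eq_square field_simps)
    then show ?thesis unfolding ct using pos by blast
  qed
  finally have sq: "(norm (t *s (a + b)))^2 = 2 * (cmod h)^2 / (1 + c0)" .
  have "hinner v (t *s (a + b)) = cnj t * h"
    using v by (simp add: hinner_scale_right hinner_add_right xperp_def h_def)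
  also have "\<dots> = complex_of_real ((cmod h)^2 / (1 + c0))"
    by (simp add: t_def mult.commute[of "cnj h"] complex_norm_square[symmetric])
  finally have re: "Re (hinner v (t *s (a + b))) = (cmod h)^2 / (1 + c0)" by simp
  have "(norm u)^2 = (norm v)^2" unfolding u_eq using sq re by (simp add: norm_diff_sq)
  then show "norm u = norm v" by (simp add: power2_eq_iff_nonneg)
  have "(norm (v - u))^2 = 2 * (cmod h)^2 / (1 + c0)" using sq by (simp add: u_eq)
  also have "\<dots> \<le> 2 * ((norm v)^2 * (1 - c0^2)) / (1 + c0)"
    using hinner_perp_bound[OF a b ab v] pos by (simp add: h_def divide_right_mono)
  also have "\<dots> = (sqrt (2 * (1 - c0)) * norm v)^2"
    using pos c0_le by (simp add: power_mult_distrib power2_eq_square field_simps)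
  finally show "norm (v - u) \<le> sqrt (2 * (1 - c0)) * norm v"
    by (rule power2_le_imp_le) (use c0_le in simp)
qed

section \<open>The restricted derivative and the condition number\<close>

definition sderiv :: "('k::finite \<Rightarrow> nat) \<Rightarrow> ('k, 'm::finite) sys \<Rightarrow> complex^'m \<Rightarrow> complex^'m \<Rightarrow> complex^'k" where
  "sderiv d F x v = (\<chi> i. Dlin d F x v $ i / complex_of_real (sqrt (real (d i)) * norm x ^ (d i - 1)))"

definition dweight :: "('k::finite \<Rightarrow> nat) \<Rightarrow> complex^'m::finite \<Rightarrow> complex^'k \<Rightarrow> complex^'k" where
  "dweight d x w = (\<chi> i. complex_of_real (sqrt (real (d i)) * norm x ^ (d i - 1)) * w$i)"

definition cond_op :: "('k::finite \<Rightarrow> nat) \<Rightarrow> ('k, 'm::finite) sys \<Rightarrow> complex^'m \<Rightarrow> complex^'k \<Rightarrow> complex^'m" where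
  "cond_op d F x w = inv_into (xperp x) (Dlin d F x) (dweight d x w)"

lemma mu_eq_cond_op:
  "full_rank d F x \<Longrightarrow> inj_on (Dlin d F x) (xperp x) \<Longrightarrow> mu d F x = ereal (bwnorm d F * onorm (cond_op d F x))"
  by (simp add: mu_def cond_op_def[abs_def] dweight_def)

lemma Dlin_add: "Dlin d F x (v + w) = Dlin d F x v + Dlin d F x w"
  by (simp add: Dlin_def vec_eq_iff ring_distribs sum.distrib)
lemma Dlin_diff: "Dlin d F x (v - w) = Dlin d F x v - Dlin d F x w"
  by (simp add: Dlin_def vec_eq_iff ring_distribs sum_subtractf)
lemma Dlin_scaleR: "Dlin d F x (r *\<^sub>R v) = r *\<^sub>R Dlin d F x v"
  by (simp add: Dlin_def vec_eq_iff sum_distrib_left scaleR_complex algebra_simps)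
lemma Dlin_zero: "Dlin d F x 0 = 0"
  by (simp add: Dlin_def vec_eq_iff)

lemma dweight_add: "dweight d x (a + b) = dweight d x a + dweight d x b"
  by (simp add: dweight_def vec_eq_iff ring_distribs)
lemma dweight_scaleR: "dweight d x (r *\<^sub>R a) = r *\<^sub>R dweight d x a"
  by (simp add: dweight_def vec_eq_iff scaleR_complex algebra_simps)

lemma sderiv_iff_dweight:
  assumes "x \<noteq> 0" "\<forall>i. d i \<ge> 1"
  shows "sderiv d F x v = w \<longleftrightarrow> Dlin d F x v = dweight d x w"
proof -
  have "sqrt (real (d i)) * norm x ^ (d i - 1) \<noteq> 0" for i
    using assms(1) assms(2)[rule_format, of i] by auto
  then show ?thesis by (auto simp: sderiv_def dweight_def vec_eq_iff field_simps)
qed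

lemma xperp_add: "v \<in> xperp x \<Longrightarrow> w \<in> xperp x \<Longrightarrow> v + w \<in> xperp x"
  by (simp add: xperp_def hinner_add_left)
lemma xperp_diff: "v \<in> xperp x \<Longrightarrow> w \<in> xperp x \<Longrightarrow> v - w \<in> xperp x"
  by (simp add: xperp_def hinner_diff_left)
lemma xperp_scaleR: "v \<in> xperp x \<Longrightarrow> r *\<^sub>R v \<in> xperp x"
  by (simp add: xperp_def hinner_scaleR_left)

definition proj_perp :: "complex^'m::finite \<Rightarrow> complex^'m \<Rightarrow> complex^'m" where
  "proj_perp x v = v - (hinner v x / complex_of_real ((norm x)^2)) *s x"

lemma proj_perp_in: "x \<noteq> 0 \<Longrightarrow> proj_perp x v \<in> xperp x"
  by (simp add: proj_perp_def xperp_def hinner_diff_left hinner_scale_left hinner_self)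

lemma proj_perp_id: "v \<in> xperp x \<Longrightarrow> proj_perp x v = v"
  by (simp add: proj_perp_def xperp_def)

text \<open>Df(x) restricted to x-perp, extended to all of C^(n+1) by recording the component
  along x: a real-linear map between spaces of the same real dimension 2(n+1).\<close>
definition augmented :: "('k::finite \<Rightarrow> nat) \<Rightarrow> ('k, 'm::finite) sys \<Rightarrow> complex^'m \<Rightarrow> complex^'m \<Rightarrow> (complex^'k) \<times> complex" where
  "augmented d F x v = (Dlin d F x (proj_perp x v), hinner v x)"

lemma linear_augmented: "linear (augmented d F x)"
proof (rule linearI)
  fix v w
  show "augmented d F x (v + w) = augmented d F x v + augmented d F x w"
    by (simp add: augmented_def proj_perp_def hinner_add_left Dlin_add[symmetric]
        add_divide_distrib vector_add_ldistrib) (simp add: algebra_simps)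
next
  fix r :: real and v
  have "proj_perp x (r *\<^sub>R v) = r *\<^sub>R proj_perp x v"
    by (simp add: proj_perp_def hinner_scaleR_left vec_eq_iff scaleR_complex algebra_simps)
  then show "augmented d F x (r *\<^sub>R v) = r *\<^sub>R augmented d F x v"
    by (simp add: augmented_def Dlin_scaleR hinner_scaleR_left scaleR_complex)
qed

lemma full_rank_iff_surj_augmented:
  fixes F :: "('k::finite, 'm::finite) sys"
  assumes x: "x \<noteq> 0"
  shows "full_rank d F x \<longleftrightarrow> surj (augmented d F x)"
proof
  assume fr: "full_rank d F x"
  have "(z, c) \<in> range (augmented d F x)" for z c
  proof -
    obtain w where w: "w \<in> xperp x" "Dlin d F x w = z"
      using fr unfolding full_rank_def by (metis UNIV_I imageE)
    define v where "v = w + (c / complex_of_real ((norm x)^2)) *s x"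
    have "hinner v x = c"
      using w(1) x by (simp add: v_def hinner_add_left hinner_scale_left hinner_self xperp_def)
    then have "augmented d F x v = (z, c)"
      using w by (simp add: augmented_def proj_perp_def v_def)
    then show ?thesis by (metis rangeI)
  qed
  then show "surj (augmented d F x)" by auto
next
  assume s: "surj (augmented d F x)"
  show "full_rank d F x"
    unfolding full_rank_def
  proof (intro set_eqI iffI)
    fix z :: "complex^'k"
    obtain v where "augmented d F x v = (z, 0)" using s by (metis surjD)
    then have "proj_perp x v \<in> xperp x" "Dlin d F x (proj_perp x v) = z"
      using proj_perp_in[OF x] by (auto simp: augmented_def)
    then show "z \<in> Dlin d F x ` xperp x" by blast
  qed simp
qed

lemma inj_on_iff_inj_augmented:
  fixes F :: "('k::finite, 'm::finite) sys"
  assumes x: "x \<noteq> 0"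
  shows "inj_on (Dlin d F x) (xperp x) \<longleftrightarrow> inj (augmented d F x)"
proof
  assume inj: "inj_on (Dlin d F x) (xperp x)"
  show "inj (augmented d F x)"
  proof (rule injI)
    fix v w assume "augmented d F x v = augmented d F x w"
    then have h: "hinner v x = hinner w x" and "Dlin d F x (proj_perp x v) = Dlin d F x (proj_perp x w)"
      by (auto simp: augmented_def)
    then have "proj_perp x v = proj_perp x w" using inj proj_perp_in[OF x] by (meson inj_onD)
    then show "v = w" using h by (simp add: proj_perp_def)
  qed
next
  assume inj: "inj (augmented d F x)"
  show "inj_on (Dlin d F x) (xperp x)"
  proof (rule inj_onI)
    fix v w assume "v \<in> xperp x" "w \<in> xperp x" "Dlin d F x v = Dlin d F x w"
    then have "augmented d F x v = augmented d F x w"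
      by (simp add: augmented_def proj_perp_id xperp_def)
    then show "v = w" using inj by (simp add: inj_eq)
  qed
qed

text \<open>Both sides of the augmented map have real dimension 2(n+1), so full rank of the
  restriction is equivalent to its injectivity.\<close>
lemma full_rank_iff_inj:
  fixes F :: "('k::finite, 'm::finite) sys"
  assumes card: "CARD('m) = CARD('k) + 1" and x: "x \<noteq> 0"
  shows "full_rank d F x \<longleftrightarrow> inj_on (Dlin d F x) (xperp x)"
proof -
  have dims: "dim (UNIV :: ((complex^'k) \<times> complex) set) = dim (UNIV :: (complex^'m) set)"
    using card by (simp add: dim_UNIV)
  show ?thesis
    unfolding full_rank_iff_surj_augmented[OF x] inj_on_iff_inj_augmented[OF x]
    using linear_augmented dims eucl.linear_surjective_imp_injective eucl.linear_injective_imp_surjective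
    by metis
qed

lemma cond_op_props:
  assumes "full_rank d F x"
  shows "cond_op d F x w \<in> xperp x" "Dlin d F x (cond_op d F x w) = dweight d x w"
  using assms unfolding full_rank_def cond_op_def
  by (auto intro: inv_into_into f_inv_into_f)

lemma bounded_linear_cond_op:
  assumes fr: "full_rank d F x" and inj: "inj_on (Dlin d F x) (xperp x)"
  shows "bounded_linear (cond_op d F x)"
proof -
  have "linear (cond_op d F x)"
  proof (rule linearI)
    fix a b
    have "Dlin d F x (cond_op d F x (a + b)) = Dlin d F x (cond_op d F x a + cond_op d F x b)"
      by (simp add: cond_op_props[OF fr] Dlin_add dweight_add)
    then show "cond_op d F x (a + b) = cond_op d F x a + cond_op d F x b"
      using inj by (meson cond_op_props(1)[OF fr] inj_onD xperp_add)
  next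
    fix r :: real and a
    have "Dlin d F x (cond_op d F x (r *\<^sub>R a)) = Dlin d F x (r *\<^sub>R cond_op d F x a)"
      by (simp add: cond_op_props[OF fr] Dlin_scaleR dweight_scaleR)
    then show "cond_op d F x (r *\<^sub>R a) = r *\<^sub>R cond_op d F x a"
      using inj by (meson cond_op_props(1)[OF fr] inj_onD xperp_scaleR)
  qed
  then show ?thesis by (simp add: linear_conv_bounded_linear)
qed

lemma norm_le_onorm_cond_op:
  assumes fr: "full_rank d F x" and inj: "inj_on (Dlin d F x) (xperp x)"
    and x: "x \<noteq> 0" and d: "\<forall>i. d i \<ge> 1" and v: "v \<in> xperp x"
  shows "norm v \<le> onorm (cond_op d F x) * norm (sderiv d F x v)"
proof -
  have "cond_op d F x (sderiv d F x v) = v"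
    unfolding cond_op_def using sderiv_iff_dweight[OF x d] inj v by (metis inv_into_f_f)
  then show ?thesis using onorm[OF bounded_linear_cond_op[OF fr inj], of "sderiv d F x v"] by simp
qed

lemma onorm_cond_op_pos:
  fixes F :: "('k::finite, 'm::finite) sys"
  assumes fr: "full_rank d F x" and inj: "inj_on (Dlin d F x) (xperp x)"
    and x: "x \<noteq> 0" and d: "\<forall>i. d i \<ge> 1"
  shows "onorm (cond_op d F x) > 0"
proof -
  obtain v where v: "v \<in> xperp x" "Dlin d F x v = (\<chi> i. 1)"
    using fr unfolding full_rank_def by (metis UNIV_I imageE)
  have "v \<noteq> 0"
  proof
    assume "v = 0"
    then have "(\<chi> i. 1) = (0 :: complex^'k)" using v(2) by (simp add: Dlin_zero)
    then show False by (simp add: vec_eq_iff)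
  qed
  then have "0 < norm v" by simp
  also have "norm v \<le> onorm (cond_op d F x) * norm (sderiv d F x v)"
    by (rule norm_le_onorm_cond_op[OF fr inj x d v(1)])
  finally show ?thesis by (simp add: zero_less_mult_iff)
qed

lemma mu_lower_bound:
  fixes F :: "('k::finite, 'm::finite) sys"
  assumes card: "CARD('m) = CARD('k) + 1" and x: "x \<noteq> 0" and d: "\<forall>i. d i \<ge> 1"
    and nF: "bwnorm d F > 0" and fr: "full_rank d F x"
  obtains m where "mu d F x = ereal m" "0 < m"
    "\<And>v. v \<in> xperp x \<Longrightarrow> norm v \<le> m * (norm (sderiv d F x v) / bwnorm d F)"
proof -
  have inj: "inj_on (Dlin d F x) (xperp x)" using full_rank_iff_inj[OF card x] fr by simp
  define m where "m = bwnorm d F * onorm (cond_op d F x)"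
  show ?thesis
  proof
    show "mu d F x = ereal m" by (simp add: m_def mu_eq_cond_op[OF fr inj])
    show "0 < m" using nF onorm_cond_op_pos[OF fr inj x d] by (simp add: m_def)
    show "norm v \<le> m * (norm (sderiv d F x v) / bwnorm d F)" if "v \<in> xperp x" for v
      using norm_le_onorm_cond_op[OF fr inj x d that] nF by (simp add: m_def)
  qed
qed

lemma mu_upper_bound:
  fixes F :: "('k::finite, 'm::finite) sys"
  assumes card: "CARD('m) = CARD('k) + 1" and x: "x \<noteq> 0" and d: "\<forall>i. d i \<ge> 1"
    and nF: "bwnorm d F > 0" and c: "c > 0"
    and lb: "\<And>v. v \<in> xperp x \<Longrightarrow> c * norm v \<le> norm (sderiv d F x v) / bwnorm d F"
  obtains \<mu> where "full_rank d F x" "mu d F x = ereal \<mu>" "0 < \<mu>" "\<mu> \<le> 1 / c"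
proof -
  have inj: "inj_on (Dlin d F x) (xperp x)"
  proof (rule inj_onI)
    fix v w assume vw: "v \<in> xperp x" "w \<in> xperp x" "Dlin d F x v = Dlin d F x w"
    then have "sderiv d F x (v - w) = 0" by (simp add: sderiv_def Dlin_diff vec_eq_iff)
    then have "c * norm (v - w) \<le> 0" using lb[OF xperp_diff[OF vw(1,2)]] by simp
    then show "v = w" using c by (simp add: mult_le_0_iff)
  qed
  have fr: "full_rank d F x" using full_rank_iff_inj[OF card x] inj by simp
  have "onorm (cond_op d F x) \<le> 1 / (c * bwnorm d F)"
  proof (rule onorm_le)
    fix z
    have "sderiv d F x (cond_op d F x z) = z"
      using sderiv_iff_dweight[OF x d] cond_op_props(2)[OF fr] by blast
    then have "c * norm (cond_op d F x z) \<le> norm z / bwnorm d F"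
      using lb[OF cond_op_props(1)[OF fr, of z]] by simp
    then show "norm (cond_op d F x z) \<le> 1 / (c * bwnorm d F) * norm z" using c nF by (simp add: field_simps)
  qed
  then have "bwnorm d F * onorm (cond_op d F x) \<le> 1 / c"
    using nF c by (simp add: field_simps)
  then show ?thesis
    using that[OF fr mu_eq_cond_op[OF fr inj]] nF onorm_cond_op_pos[OF fr inj x d] by simp
qed

lemma norm_sderiv_scale:
  fixes x :: "complex^'m::finite"
  assumes "\<forall>i. d i \<ge> 1" "c \<noteq> 0"
  shows "norm (sderiv d F (c *s x) w) = norm (sderiv d F x w)"
proof -
  have "cmod (sderiv d F (c *s x) w $ i) = cmod (sderiv d F x w $ i)" for i
  proof -
    have cancel: "a * X / (s * (a * n)) = X / (s * n)" if "a \<noteq> 0" for a X s n :: real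
      using that by simp
    show ?thesis
      using assms by (simp add: sderiv_def Dlin_dderiv dderiv_scale norm_smult norm_mult norm_divide
          norm_power power_mult_distrib cancel)
  qed
  then show ?thesis by (simp add: norm_vec_def)
qed

section \<open>Perturbation of the point and of the system\<close>

definition scaled_dderiv :: "('k::finite \<Rightarrow> nat) \<Rightarrow> ('k, 'm::finite) sys \<Rightarrow> complex^'m \<Rightarrow> complex^'m \<Rightarrow> complex^'k" where
  "scaled_dderiv d P a u = (\<chi> i. dderiv (d i) (P i) a u / complex_of_real (sqrt (real (d i))))"

lemma norm_sderiv_unit:
  assumes d: "\<forall>i. d i \<ge> 1" and a: "norm a = 1" and nP: "bwnorm d P > 0"
  shows "norm (sderiv d P a u) / bwnorm d P = norm (scaled_dderiv d (normalize_sys d P) a u)"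
proof -
  have "sderiv d P a u = complex_of_real (bwnorm d P) *s scaled_dderiv d (normalize_sys d P) a u"
    using nP d a by (simp add: sderiv_def scaled_dderiv_def Dlin_dderiv vec_eq_iff normalize_sys_def
        dderiv_divide_poly)
  then show ?thesis using nP by (simp add: norm_smult)
qed

lemma dderiv_perturbation:
  fixes a b u v :: "complex^'m::finite"
  assumes k: "1 \<le> k" and a: "norm a = 1" and b: "norm b = 1"
    and ba: "norm (b - a) \<le> \<theta>" and vu: "norm (v - u) \<le> \<theta> * norm v" and uv: "norm u = norm v"
  shows "cmod (dderiv k q b v - dderiv k p a u)
      \<le> real k * norm v * (sqrt (bw_sq k (\<lambda>\<alpha>. q \<alpha> - p \<alpha>)) + real k * \<theta> * sqrt (bw_sq k p))"
proof -
  define e where "e = sqrt (bw_sq k (\<lambda>\<alpha>. q \<alpha> - p \<alpha>))"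
  define f where "f = sqrt (bw_sq k p)"
  have f: "f \<ge> 0" by (simp add: f_def bw_sq_nonneg)
  have split: "dderiv k q b v - dderiv k p a u =
      dderiv k (\<lambda>\<alpha>. q \<alpha> - p \<alpha>) b v + dderiv k p b (v - u) + (dderiv k p b u - dderiv k p a u)"
    by (simp add: dderiv_diff_poly dderiv_diff_dir)
  have T1: "cmod (dderiv k (\<lambda>\<alpha>. q \<alpha> - p \<alpha>) b v) \<le> norm v * (real k * e)"
    using dderiv_bound[OF k, of "\<lambda>\<alpha>. q \<alpha> - p \<alpha>" b v] b by (simp add: e_def)
  have "cmod (dderiv k p b (v - u)) \<le> norm (v - u) * (real k * f)"
    using dderiv_bound[OF k, of p b "v - u"] b by (simp add: f_def)
  also have "\<dots> \<le> (\<theta> * norm v) * (real k * f)"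
    using vu f by (intro mult_right_mono) simp_all
  finally have T2: "cmod (dderiv k p b (v - u)) \<le> (\<theta> * norm v) * (real k * f)" .
  have "cmod (dderiv k p b u - dderiv k p a u) \<le> norm v * (real k * f) * (real (k - 1) * norm (b - a))"
    using dderiv_lipschitz[OF k, of a 1 b p u] a b uv by (simp add: f_def)
  also have "\<dots> \<le> norm v * (real k * f) * (real (k - 1) * \<theta>)"
    using ba f by (intro mult_left_mono) simp_all
  finally have T3: "cmod (dderiv k p b u - dderiv k p a u) \<le> norm v * (real k * f) * (real (k - 1) * \<theta>)" .
  have "cmod (dderiv k q b v - dderiv k p a u) \<le> cmod (dderiv k (\<lambda>\<alpha>. q \<alpha> - p \<alpha>) b v)
      + cmod (dderiv k p b (v - u)) + cmod (dderiv k p b u - dderiv k p a u)"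
    unfolding split by (rule order_trans[OF norm_triangle_ineq add_right_mono[OF norm_triangle_ineq]])
  also have "\<dots> \<le> norm v * (real k * e) + (\<theta> * norm v) * (real k * f)
      + norm v * (real k * f) * (real (k - 1) * \<theta>)"
    using T1 T2 T3 by linarith
  also have "\<dots> = real k * norm v * (e + real k * \<theta> * f)"
    using k by (simp add: algebra_simps of_nat_diff)
  finally show ?thesis by (simp add: e_def f_def)
qed

lemma norm_vec_bound:
  fixes A :: "complex^'k::finite"
  assumes "\<And>i. cmod (A$i) \<le> s * (e i + t * f i)" "s \<ge> 0" "t \<ge> 0" "\<And>i. e i \<ge> 0" "\<And>i. f i \<ge> 0"
  shows "norm A \<le> s * (L2_set e UNIV + t * L2_set f UNIV)"
proof -
  have "norm A \<le> L2_set (\<lambda>i. s * (e i + t * f i)) UNIV"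
    unfolding norm_vec_def by (rule L2_set_mono) (auto simp: assms)
  also have "\<dots> = s * L2_set (\<lambda>i. e i + t * f i) UNIV"
    using assms by (simp add: L2_set_right_distrib)
  also have "L2_set (\<lambda>i. e i + t * f i) UNIV \<le> L2_set e UNIV + L2_set (\<lambda>i. t * f i) UNIV"
    by (rule L2_set_triangle_ineq)
  also have "L2_set (\<lambda>i. t * f i) UNIV = t * L2_set f UNIV"
    using assms by (simp add: L2_set_right_distrib)
  finally show ?thesis using assms(2) by (simp add: mult_left_mono)
qed

lemma scaled_dderiv_perturbation:
  fixes P Q :: "('k::finite, 'm::finite) sys" and a b u v :: "complex^'m"
  assumes d: "\<forall>i. d i \<ge> 1" and dD: "\<forall>i. d i \<le> D" and a: "norm a = 1" and b: "norm b = 1"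
    and ba: "norm (b - a) \<le> \<theta>" and vu: "norm (v - u) \<le> \<theta> * norm v" and uv: "norm u = norm v"
    and \<theta>: "\<theta> \<ge> 0"
  shows "norm (scaled_dderiv d Q b v - scaled_dderiv d P a u)
      \<le> sqrt (real D) * norm v * (bwnorm d (\<lambda>i \<alpha>. Q i \<alpha> - P i \<alpha>) + real D * \<theta> * bwnorm d P)"
proof -
  define e where "e i = sqrt (bw_sq (d i) (\<lambda>\<alpha>. Q i \<alpha> - P i \<alpha>))" for i
  define f where "f i = sqrt (bw_sq (d i) (P i))" for i
  have "cmod ((scaled_dderiv d Q b v - scaled_dderiv d P a u) $ i)
      \<le> (sqrt (real D) * norm v) * (e i + (real D * \<theta>) * f i)" for i
  proof -
    have k: "1 \<le> d i" "d i \<le> D" using d dD by auto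
    have ef: "e i \<ge> 0" "f i \<ge> 0" by (auto simp: e_def f_def bw_sq_nonneg)
    have "cmod ((scaled_dderiv d Q b v - scaled_dderiv d P a u) $ i)
        = cmod (dderiv (d i) (Q i) b v - dderiv (d i) (P i) a u) / sqrt (real (d i))"
      by (simp add: scaled_dderiv_def norm_divide diff_divide_distrib[symmetric])
    also have "\<dots> \<le> real (d i) * norm v * (e i + real (d i) * \<theta> * f i) / sqrt (real (d i))"
      using dderiv_perturbation[OF k(1) a b ba vu uv] by (simp add: e_def f_def divide_right_mono)
    also have "\<dots> = (real (d i) / sqrt (real (d i))) * (norm v * (e i + real (d i) * \<theta> * f i))"
      by simp
    also have "\<dots> = sqrt (real (d i)) * (norm v * (e i + real (d i) * \<theta> * f i))"
      by (simp add: real_div_sqrt)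
    also have "\<dots> \<le> sqrt (real D) * (norm v * (e i + real D * \<theta> * f i))"
      using k ef \<theta> by (intro mult_mono real_sqrt_le_mono mult_left_mono add_left_mono mult_right_mono) auto
    finally show ?thesis by (simp add: algebra_simps)
  qed
  then have "norm (scaled_dderiv d Q b v - scaled_dderiv d P a u)
      \<le> (sqrt (real D) * norm v) * (L2_set e UNIV + (real D * \<theta>) * L2_set f UNIV)"
    by (rule norm_vec_bound) (auto simp: e_def f_def bw_sq_nonneg \<theta>)
  then show ?thesis by (simp add: bwnorm_eq_L2 e_def[abs_def] f_def[abs_def] algebra_simps)
qed

lemma perturbation_step:
  fixes P Q :: "('k::finite, 'm::finite) sys" and a b v :: "complex^'m"
  assumes d: "\<forall>i. d i \<ge> 1" and dD: "\<forall>i. d i \<le> D"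
    and a: "norm a = 1" and b: "norm b = 1" and ab: "hinner a b = complex_of_real c0" and c0: "c0 \<ge> 0"
    and \<theta>: "2 * (1 - c0) \<le> \<theta>^2" "\<theta> \<ge> 0"
    and nP: "bwnorm d P > 0" and nQ: "bwnorm d Q > 0" and v: "v \<in> xperp b"
  obtains u where "u \<in> xperp a" "norm u = norm v"
    "norm (sderiv d P a u) / bwnorm d P
      \<le> norm (sderiv d Q b v) / bwnorm d Q + sqrt (real D) * (nrmdiff d P Q + real D * \<theta>) * norm v"
proof -
  define u where "u = v - (hinner v a / complex_of_real (1 + c0)) *s (a + b)"
  have u: "u \<in> xperp a" "norm u = norm v" "norm (v - u) \<le> sqrt (2 * (1 - c0)) * norm v"
    using perp_rotation[OF a b ab c0 v] unfolding u_def by auto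
  have sqrt_le: "sqrt (2 * (1 - c0)) \<le> \<theta>"
    using real_sqrt_le_mono[OF \<theta>(1)] \<theta>(2) by simp
  have vu: "norm (v - u) \<le> \<theta> * norm v"
    using u(3) mult_right_mono[OF sqrt_le norm_ge_zero[of v]] by linarith
  have "(norm (b - a))^2 = 2 * (1 - c0)"
    using norm_diff_sq[of b a] a b ab by (simp add: hinner_commute[of b a])
  then have ba: "norm (b - a) \<le> \<theta>"
    using sqrt_le by (metis norm_ge_zero real_sqrt_unique)
  define P' where "P' = normalize_sys d P"
  define Q' where "Q' = normalize_sys d Q"
  have "norm (scaled_dderiv d P' a u)
      \<le> norm (scaled_dderiv d Q' b v) + norm (scaled_dderiv d Q' b v - scaled_dderiv d P' a u)"
    using norm_triangle_sub[of "scaled_dderiv d P' a u" "scaled_dderiv d Q' b v"]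
    by (simp add: norm_minus_commute)
  also have "norm (scaled_dderiv d Q' b v - scaled_dderiv d P' a u)
      \<le> sqrt (real D) * norm v * (bwnorm d (\<lambda>i \<alpha>. Q' i \<alpha> - P' i \<alpha>) + real D * \<theta> * bwnorm d P')"
    by (rule scaled_dderiv_perturbation[OF d dD a b ba vu u(2) \<theta>(2)])
  also have "bwnorm d (\<lambda>i \<alpha>. Q' i \<alpha> - P' i \<alpha>) = nrmdiff d P Q"
    by (simp add: P'_def Q'_def nrmdiff_eq[symmetric] nrmdiff_sym)
  finally show ?thesis
    using that[OF u(1,2)] norm_sderiv_unit[OF d a nP] norm_sderiv_unit[OF d b nQ]
      bwnorm_normalize_sys[OF nP]
    by (simp add: P'_def Q'_def algebra_simps)
qed

lemma lower_bound_transfer: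
  fixes F G :: "('k::finite, 'm::finite) sys" and x y :: "complex^'m"
  assumes d: "\<forall>i. d i \<ge> 1" and dD: "\<forall>i. d i \<le> D"
    and nF: "bwnorm d F > 0" and nG: "bwnorm d G > 0" and x: "x \<noteq> 0" and y: "y \<noteq> 0"
    and m: "m > 0" and lb: "\<And>u. u \<in> xperp x \<Longrightarrow> norm u \<le> m * (norm (sderiv d F x u) / bwnorm d F)"
    and v: "v \<in> xperp y"
  shows "(1 / m - sqrt (real D) * (nrmdiff d F G + real D * dR x y)) * norm v
      \<le> norm (sderiv d G y v) / bwnorm d G"
proof -
  obtain a b c0 \<omega> where a: "norm a = 1" and b: "norm b = 1"
    and ab: "hinner a b = complex_of_real c0" "c0 \<ge> 0" "2 * (1 - c0) \<le> (dR x y)^2"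
    and a_eq: "a = complex_of_real (1 / norm x) *s x"
    and b_eq: "b = (\<omega> / complex_of_real (norm y)) *s y" and \<omega>: "cmod \<omega> = 1"
    by (rule unit_representatives[OF x y])
  have ca: "complex_of_real (1 / norm x) \<noteq> 0" and cb: "\<omega> / complex_of_real (norm y) \<noteq> 0"
    using x y \<omega> by auto
  have "v \<in> xperp b" using v unfolding b_eq xperp_scale[OF cb] .
  then obtain u where u: "u \<in> xperp a" "norm u = norm v"
    and est: "norm (sderiv d F a u) / bwnorm d F \<le> norm (sderiv d G b v) / bwnorm d G
      + sqrt (real D) * (nrmdiff d F G + real D * dR x y) * norm v"
    using perturbation_step[OF d dD a b ab dR_cos(2) nF nG] by blast
  have "u \<in> xperp x" using u(1) unfolding a_eq xperp_scale[OF ca] .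
  then have "norm v / m \<le> norm (sderiv d F x u) / bwnorm d F"
    using lb[of u] u(2) m by (simp add: field_simps)
  also have "\<dots> = norm (sderiv d F a u) / bwnorm d F"
    by (simp only: a_eq norm_sderiv_scale[OF d ca])
  also note est
  also have "norm (sderiv d G b v) = norm (sderiv d G y v)"
    by (simp only: b_eq norm_sderiv_scale[OF d cb])
  finally show ?thesis by (simp add: algebra_simps)
qed

lemma mu_transfer:
  fixes F G :: "('k::finite, 'm::finite) sys" and x y :: "complex^'m"
  assumes card: "CARD('m) = CARD('k) + 1" and d: "\<forall>i. d i \<ge> 1" and dD: "\<forall>i. d i \<le> D"
    and nF: "bwnorm d F > 0" and nG: "bwnorm d G > 0" and x: "x \<noteq> 0" and y: "y \<noteq> 0"
    and fr: "full_rank d F x" and muF: "mu d F x = ereal m"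
    and small: "sqrt (real D) * (nrmdiff d F G + real D * dR x y) * m < 1"
  obtains \<mu> where "full_rank d G y" "mu d G y = ereal \<mu>" "0 < \<mu>"
    "\<mu> * (1 - sqrt (real D) * (nrmdiff d F G + real D * dR x y) * m) \<le> m"
proof -
  define \<eta> where "\<eta> = sqrt (real D) * (nrmdiff d F G + real D * dR x y)"
  obtain m' where "mu d F x = ereal m'" and m: "0 < m'"
    and lb: "\<And>v. v \<in> xperp x \<Longrightarrow> norm v \<le> m' * (norm (sderiv d F x v) / bwnorm d F)"
    using mu_lower_bound[OF card x d nF fr] by blast
  then have "m' = m" using muF by simp
  have c: "1 / m - \<eta> > 0" using small m \<open>m' = m\<close> by (simp add: \<eta>_def field_simps)
  obtain \<mu> where G: "full_rank d G y" "mu d G y = ereal \<mu>" "0 < \<mu>" and le: "\<mu> \<le> 1 / (1 / m - \<eta>)"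
    using mu_upper_bound[OF card y d nG c] lower_bound_transfer[OF d dD nF nG x y m lb]
    unfolding \<eta>_def \<open>m' = m\<close> by blast
  have "\<mu> * (1 - \<eta> * m) \<le> 1 / (1 / m - \<eta>) * (1 - \<eta> * m)"
    using le small by (intro mult_right_mono) (simp_all add: \<eta>_def)
  also have "\<dots> = m" using c m \<open>m' = m\<close> by (simp add: field_simps)
  finally show ?thesis using that[OF G] by (simp add: \<eta>_def)
qed

text \<open>The hypotheses u, v \<le> \<epsilon>/5 bound the error term: \<eta> mu(f,x) \<le> 3\<epsilon>/5, where
  \<eta> = sqrt(D) (\<delta> + D \<theta>) and D^(3/2) = D sqrt(D).\<close>
lemma eta_mu_bound:
  fixes D m \<theta> \<delta> \<epsilon> :: real
  assumes D: "D > 0" and u: "D powr (3/2) / 2 * m * \<theta> \<le> \<epsilon> / 5" and v: "sqrt D * m * \<delta> \<le> \<epsilon> / 5"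
  shows "sqrt D * (\<delta> + D * \<theta>) * m \<le> 3 * \<epsilon> / 5"
proof -
  have "D powr (3/2) = D powr (1 + 1/2)" by simp
  also have "\<dots> = D powr 1 * D powr (1/2)" by (rule powr_add)
  also have "\<dots> = D * sqrt D" using D by (simp add: powr_half_sqrt)
  finally show ?thesis using u v by (simp add: algebra_simps)
qed

lemma eta_mu_small:
  fixes \<eta> m \<mu> :: real
  assumes "0 \<le> \<eta>" "\<eta> * m \<le> 3/20" "0 \<le> \<mu>" "\<mu> * (1 - \<eta> * m) \<le> m"
  shows "\<eta> * \<mu> < 1"
proof -
  have "\<eta> * \<mu> * (17/20) \<le> \<eta> * \<mu> * (1 - \<eta> * m)"
    using assms by (intro mult_left_mono) auto
  also have "\<dots> \<le> \<eta> * m" using mult_left_mono[OF assms(4,1)] by (simp add: algebra_simps)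
  finally show ?thesis using assms(2) by linarith
qed

lemma ratio_bounds:
  fixes \<epsilon> \<eta> m \<mu> :: real
  assumes \<epsilon>: "0 < \<epsilon>" "\<epsilon> \<le> 1/4" and \<eta>: "0 \<le> \<eta>" "\<eta> * m \<le> 3 * \<epsilon> / 5"
    and pos: "0 < m" "0 < \<mu>"
    and up1: "\<mu> * (1 - \<eta> * m) \<le> m" and up2: "m * (1 - \<eta> * \<mu>) \<le> \<mu>" and small: "\<eta> * \<mu> < 1"
  shows "(1 - \<epsilon>) * \<mu> \<le> m" "m \<le> (1 + \<epsilon>) * \<mu>"
proof -
  have "(1 - \<epsilon>) * \<mu> \<le> (1 - \<eta> * m) * \<mu>"
    using \<epsilon> \<eta> pos by (intro mult_right_mono) auto
  then show "(1 - \<epsilon>) * \<mu> \<le> m" using up1 by (simp add: algebra_simps)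
  define s where "s = \<eta> * m"
  define p where "p = \<eta> * \<mu>"
  have s1: "1 - s > 0" using \<epsilon> \<eta> by (simp add: s_def)
  have "p * (1 - s) \<le> s"
    using mult_left_mono[OF up1 \<eta>(1)] by (simp add: p_def s_def algebra_simps)
  then have "p \<le> s / (1 - s)" using s1 by (simp add: field_simps)
  also have "s / (1 - s) \<le> \<epsilon> / (1 + \<epsilon>)"
  proof -
    have "s * (1 + 2 * \<epsilon>) \<le> 3 * \<epsilon> / 5 * (1 + 2 * \<epsilon>)"
      using \<epsilon> \<eta> by (intro mult_right_mono) (auto simp: s_def)
    then have "s + 2 * (\<epsilon> * s) \<le> 3/5 * \<epsilon> + 6/5 * (\<epsilon> * \<epsilon>)"
      by (simp add: algebra_simps)
    moreover have "\<epsilon> * \<epsilon> \<le> \<epsilon> * (1/4)" using \<epsilon> by (intro mult_left_mono) auto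
    ultimately have "s + \<epsilon> * s \<le> \<epsilon> - \<epsilon> * s" using \<epsilon> by linarith
    then have "s * (1 + \<epsilon>) \<le> \<epsilon> * (1 - s)" by (simp add: algebra_simps)
    then show ?thesis using s1 \<epsilon> by (simp add: field_simps)
  qed
  finally have "1 \<le> (1 + \<epsilon>) * (1 - p)" using \<epsilon> by (simp add: field_simps)
  then have "m \<le> m * ((1 + \<epsilon>) * (1 - p))" using pos by simp
  also have "\<dots> = (1 + \<epsilon>) * (m * (1 - p))" by simp
  also have "\<dots> \<le> (1 + \<epsilon>) * \<mu>" using up2 \<epsilon> by (intro mult_left_mono) (auto simp: p_def)
  finally show "m \<le> (1 + \<epsilon>) * \<mu>" .
qed

theorem corollary1:
  fixes F G :: "('k::finite, 'm::finite) sys" and d :: "'k \<Rightarrow> nat"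
    and x y :: "complex^'m" and \<epsilon> :: real
  assumes "CARD('m) = CARD('k) + 1" and "CARD('k) \<ge> 2"
    and "\<forall>i. d i \<ge> 1" and "Dmax d \<ge> 2"
    and "homsys d F" and "homsys d G"
    and "F \<noteq> (\<lambda>_ _. 0)" and "G \<noteq> (\<lambda>_ _. 0)"
    and "x \<noteq> 0" and "y \<noteq> 0"
    and "0 < \<epsilon>" and "\<epsilon> \<le> 1/4"
    and "ereal (real (Dmax d) powr (3/2) / 2) * mu d F x * ereal (dR x y) \<le> ereal (\<epsilon>/5)"
    and "ereal (sqrt (real (Dmax d))) * mu d F x * ereal (nrmdiff d F G) \<le> ereal (\<epsilon>/5)"
    and "full_rank d F x"
  shows "full_rank d G y \<and> ereal (1 - \<epsilon>) * mu d G y \<le> mu d F x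
         \<and> mu d F x \<le> ereal (1 + \<epsilon>) * mu d G y"
proof -
  note card = assms(1) and d = assms(3) and x = assms(9) and y = assms(10) and frF = assms(15)
  define D where "D = Dmax d"
  define \<eta> where "\<eta> = sqrt (real D) * (nrmdiff d F G + real D * dR x y)"
  have dD: "\<forall>i. d i \<le> D" by (simp add: D_def d_le_Dmax)
  have nF: "bwnorm d F > 0" and nG: "bwnorm d G > 0" using bwnorm_pos assms(5-8) by auto
  have \<eta>: "0 \<le> \<eta>" by (simp add: \<eta>_def nrmdiff_def bwnorm_nonneg dR_cos(2))
  obtain m where muF: "mu d F x = ereal m" and m: "0 < m"
    using mu_lower_bound[OF card x d nF frF] by blast
  have small: "\<eta> * m \<le> 3 * \<epsilon> / 5"
    unfolding \<eta>_def using assms(4,13,14) by (intro eta_mu_bound) (simp_all add: muF D_def)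
  have "\<eta> * m < 1" using small assms(12) by simp
  then obtain \<mu> where frG: "full_rank d G y" and muG: "mu d G y = ereal \<mu>" and \<mu>: "0 < \<mu>"
    and up1: "\<mu> * (1 - \<eta> * m) \<le> m"
    by (rule mu_transfer[OF card d dD nF nG x y frF muF, folded \<eta>_def])
  have "\<eta> * \<mu> < 1"
    using eta_mu_small[OF \<eta> _ _ up1] small assms(12) \<mu> by simp
  then obtain m' where "mu d F x = ereal m'" "m' * (1 - \<eta> * \<mu>) \<le> \<mu>"
    by (rule mu_transfer[OF card d dD nG nF y x frG muG,
          unfolded nrmdiff_sym[of d G F] dR_sym[of y x], folded \<eta>_def])
  then have up2: "m * (1 - \<eta> * \<mu>) \<le> \<mu>" using muF by simp
  show ?thesis
    using ratio_bounds[OF assms(11,12) \<eta> small m \<mu> up1 up2 \<open>\<eta> * \<mu> < 1\<close>] frG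
    by (simp add: muF muG)
qed

end
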